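(* Let $(\mathcal C,\mathcal D,O,\vec z,v)$ be a configuration for $(F,f)$, let $\mathcal D'\subseteq\mathcal D$, and let either $\mathcal C'=\mathcal C$, or $\mathcal C'=\mathcal C\setminus\{C\}$ for a PB constraint $C$ for which there is a substitution $\omega$ with $$\mathcal C'\cup\{f\le v-1\}\cup\{\neg C\}\ \vdash\ (\mathcal C'\cup\{C\})|_\omega\cup\{f|_\omega\le f\}\cup O(\vec z|_\omega,\vec z).$$ If $(\mathcal C,\mathcal D,O,\vec z,v)$ is weakly valid then $(\mathcal C',\mathcal D',O,\vec z,v)$ is weakly valid; if it is valid then $(\mathcal C',\mathcal D',O,\vec z,v)$ is valid.
   Context: Boolean variables take values in $\{0,1\}$; a literal is a variable $x$ or $\bar x=1-x$. A PB constraint is $C:\ \sum_i a_i\ell_i\ge A$ with integer $a_i,A$; its negation $\neg C$ is $\sum_i -a_i\ell_i\ge -A+1$. A total assignment $\alpha$ satisfies $C$ if $\sum_i a_i\alpha(\ell_i)\ge A$. A PB formula is a finite set of PB constraints. A substitution $\omega$ maps variables to literals or to $\{0,1\}$ (identity outside its domain, extended to literals by $\omega(\bar x)=\overline{\omega(x)}$); $C|_\omega$ replaces each $\ell_i$ by $\omega(\ell_i)$, $G|_\omega=\{D|_\omega: D\in G\}$, and for a total assignment $\alpha$, $\alpha\circ\omega$ is $x\mapsto\alpha(\omega(x))$. An objective is $f=\sum_i w_i\ell_i$ with integer $w_i$; $f|_\omega=\sum_i w_i\omega(\ell_i)$; $f\le k$ and $f|_\omega\le f$ are read as PB constraints, and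 for $k=\infty$ the constraints $f\le\infty$, $f\le\infty-1$ are trivially true (empty). $G\vdash D$ means $D$ is derivable from $G$ in the cutting planes system (axioms from $G$, literal axioms $\ell\ge0$, positive integer linear combinations, division of a constraint with nonnegative coefficients by a positive integer rounding coefficients and degree up), where additionally $G\vdash D$ whenever $0\ge1$ is so derivable from $G\cup\{\neg D\}$; $G\vdash H$ means $G\vdash D$ for all $D\in H$. This derivability is sound. A preorder encoding is a PB formula $O(\vec u,\vec v)$ over two lists of $n$ placeholder variables with a list $\vec z=(z_1,\dots,z_n)$ of variables, such that $\alpha\preceq\beta$ iff $O(\vec z|_\alpha,\vec z|_\beta)$ is true is reflexive and transitive; here $O(\vec z|_\alpha,\vec z|_\beta)$ is $O$ with $u_i$ replaced by $\alpha(z_i)$ and $v_i$ by $\beta(z_i)$, so $O(\vec z|_\omega,\vec z)$ replaces $u_i$ by $\omega(z_i)$ and $v_i$ by $z_i$. $\alpha\preceq_f\beta$ iff $\alpha\preceq\beta$ and $f(\alpha)\le f(\beta)$. Fix input $F$ and objective $f$. A configuration $(\mathcal C,\mathcal D,O,\vec z,v)$ has PB sets $\mathcal C,\mathcal D$, a preorder encoding, and $v\in\mathbb Z\cup\{\infty\}$. It is weakly valid if (1) for every integer $v'<v$, satisfiability of $F\cup\{f\le v'\}$ implies satisfiability of $\mathcal C\cup\{f\le v'\}$; (2) every total $\rho$ satisfying $\mathcal C\cup\{f\le v-1\}$ admits a total $\rho'\preceq_f\rho$ satisfying $\mathcal C\cup\mathcal D\cup\{f\le v-1\}$. It is valid if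 also (3) $v<\infty$ implies $F\cup\{f\le v\}$ satisfiable; (4) for every integer $v'<v$, satisfiability of $\mathcal C\cup\{f\le v'\}$ implies satisfiability of $F\cup\{f\le v'\}$. *)

theory Defs
  imports Main
begin

datatype 'v lit = Pos 'v | Neg 'v

fun lit_var :: "'v lit \<Rightarrow> 'v" where
  "lit_var (Pos x) = x" | "lit_var (Neg x) = x"

fun lit_neg :: "'v lit \<Rightarrow> 'v lit" where
  "lit_neg (Pos x) = Neg x" | "lit_neg (Neg x) = Pos x"

fun lit_val :: "('v \<Rightarrow> bool) \<Rightarrow> 'v lit \<Rightarrow> int" where
  "lit_val \<alpha> (Pos x) = (if \<alpha> x then 1 else 0)"
| "lit_val \<alpha> (Neg x) = (if \<alpha> x then 0 else 1)"

text \<open>A PB constraint \<open>\<Sum>i a_i l_i \<ge> A\<close>: list of (coefficient, literal) terms and degree.\<close>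
type_synonym 'v pbc = "(int \<times> 'v lit) list \<times> int"

definition lhs_val :: "('v \<Rightarrow> bool) \<Rightarrow> (int \<times> 'v lit) list \<Rightarrow> int" where
  "lhs_val \<alpha> ts = (\<Sum>(a, l) \<leftarrow> ts. a * lit_val \<alpha> l)"

definition sat_pbc :: "('v \<Rightarrow> bool) \<Rightarrow> 'v pbc \<Rightarrow> bool" where
  "sat_pbc \<alpha> C = (lhs_val \<alpha> (fst C) \<ge> snd C)"

definition sat_set :: "('v \<Rightarrow> bool) \<Rightarrow> 'v pbc set \<Rightarrow> bool" where
  "sat_set \<alpha> G = (\<forall>C\<in>G. sat_pbc \<alpha> C)"

definition satisfiable :: "'v pbc set \<Rightarrow> bool" where
  "satisfiable G = (\<exists>\<alpha>. sat_set \<alpha> G)"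

definition neg_pbc :: "'v pbc \<Rightarrow> 'v pbc" where
  "neg_pbc C = (map (\<lambda>(a, l). (- a, l)) (fst C), - snd C + 1)"

text \<open>Image of a variable under a substitution: a literal or a constant 0/1.\<close>
datatype 'v lterm = LitT "'v lit" | ConstT bool

fun lterm_neg :: "'v lterm \<Rightarrow> 'v lterm" where
  "lterm_neg (LitT l) = LitT (lit_neg l)" | "lterm_neg (ConstT b) = ConstT (\<not> b)"

text \<open>A substitution is a total map from variables to literals/constants
  (identity outside its domain means \<open>\<omega> x = LitT (Pos x)\<close>).  Extension to literals:\<close>
fun subst_lit :: "('a \<Rightarrow> 'b lterm) \<Rightarrow> 'a lit \<Rightarrow> 'b lterm" where
  "subst_lit \<omega> (Pos x) = \<omega> x" | "subst_lit \<omega> (Neg x) = lterm_neg (\<omega> x)"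

text \<open>Substitution in a linear term \<open>\<Sum> a_i l_i\<close>: returns the remaining linear term
  and the constant contributed by literals mapped to 0/1.\<close>
definition subst_terms :: "('a \<Rightarrow> 'b lterm) \<Rightarrow> (int \<times> 'a lit) list \<Rightarrow> (int \<times> 'b lit) list \<times> int" where
  "subst_terms \<omega> ts =
     (concat (map (\<lambda>(a, l). case subst_lit \<omega> l of LitT l' \<Rightarrow> [(a, l')] | ConstT _ \<Rightarrow> []) ts),
      (\<Sum>(a, l) \<leftarrow> ts. case subst_lit \<omega> l of LitT _ \<Rightarrow> 0 | ConstT b \<Rightarrow> (if b then a else 0)))"

text \<open>\<open>C|_\<omega>\<close> (constants moved to the right-hand side).\<close>
definition subst_pbc :: "('a \<Rightarrow> 'b lterm) \<Rightarrow> 'a pbc \<Rightarrow> 'b pbc" where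
  "subst_pbc \<omega> C = (fst (subst_terms \<omega> (fst C)), snd C - snd (subst_terms \<omega> (fst C)))"

definition subst_set :: "('a \<Rightarrow> 'b lterm) \<Rightarrow> 'a pbc set \<Rightarrow> 'b pbc set" where
  "subst_set \<omega> G = subst_pbc \<omega> ` G"

fun lterm_val :: "('v \<Rightarrow> bool) \<Rightarrow> 'v lterm \<Rightarrow> bool" where
  "lterm_val \<alpha> (LitT l) = (lit_val \<alpha> l = 1)" | "lterm_val \<alpha> (ConstT b) = b"

definition assign_comp :: "('v \<Rightarrow> bool) \<Rightarrow> ('v \<Rightarrow> 'v lterm) \<Rightarrow> ('v \<Rightarrow> bool)" where
  "assign_comp \<alpha> \<omega> = (\<lambda>x. lterm_val \<alpha> (\<omega> x))"

type_synonym 'v obj = "(int \<times> 'v lit) list"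

definition obj_val :: "('v \<Rightarrow> bool) \<Rightarrow> 'v obj \<Rightarrow> int" where
  "obj_val \<alpha> f = lhs_val \<alpha> f"

datatype bnd = Fin int | Infty

fun bnd_less :: "int \<Rightarrow> bnd \<Rightarrow> bool" where
  "bnd_less k (Fin v) = (k < v)" | "bnd_less k Infty = True"

fun bnd_minus1 :: "bnd \<Rightarrow> bnd" where
  "bnd_minus1 (Fin v) = Fin (v - 1)" | "bnd_minus1 Infty = Infty"

text \<open>The constraint \<open>f \<le> k\<close>, i.e. \<open>\<Sum> -w_i l_i \<ge> -k\<close>, as a (singleton) set;
  empty (trivially true) for \<open>k = \<infinity>\<close>.\<close>
fun obj_le :: "'v obj \<Rightarrow> bnd \<Rightarrow> 'v pbc set" where
  "obj_le f (Fin k) = {(map (\<lambda>(w, l). (- w, l)) f, - k)}"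
| "obj_le f Infty = {}"

text \<open>The constraint \<open>f|_\<omega> \<le> f\<close>, i.e. \<open>f - T \<ge> c\<close> where \<open>f|_\<omega> = T + c\<close>.\<close>
definition obj_subst_le :: "'v obj \<Rightarrow> ('v \<Rightarrow> 'v lterm) \<Rightarrow> 'v pbc" where
  "obj_subst_le f \<omega> =
     (f @ map (\<lambda>(w, l). (- w, l)) (fst (subst_terms \<omega> f)), snd (subst_terms \<omega> f))"

text \<open>Normal form of a constraint over variables (using \<open>\<not>x = 1 - x\<close>): coefficient of each
  variable and the resulting degree; constraints with the same normal form are identified.\<close>
definition norm_coeff :: "'v pbc \<Rightarrow> 'v \<Rightarrow> int" where
  "norm_coeff C x = (\<Sum>(a, l) \<leftarrow> fst C. if lit_var l = x then (case l of Pos _ \<Rightarrow> a | Neg _ \<Rightarrow> - a) else 0)"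

definition norm_deg :: "'v pbc \<Rightarrow> int" where
  "norm_deg C = snd C - (\<Sum>(a, l) \<leftarrow> fst C. case l of Pos _ \<Rightarrow> 0 | Neg _ \<Rightarrow> a)"

definition add_pbc :: "'v pbc \<Rightarrow> 'v pbc \<Rightarrow> 'v pbc" where
  "add_pbc C D = (fst C @ fst D, snd C + snd D)"

definition scale_pbc :: "int \<Rightarrow> 'v pbc \<Rightarrow> 'v pbc" where
  "scale_pbc c C = (map (\<lambda>(a, l). (c * a, l)) (fst C), c * snd C)"

text \<open>Division by \<open>c > 0\<close> rounding up: \<open>\<lceil>a/c\<rceil> = -((-a) div c)\<close>.\<close>
definition div_pbc :: "int \<Rightarrow> 'v pbc \<Rightarrow> 'v pbc" where
  "div_pbc c C = (map (\<lambda>(a, l). (- ((- a) div c), l)) (fst C), - ((- snd C) div c))"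

inductive cp :: "'v pbc set \<Rightarrow> 'v pbc \<Rightarrow> bool" for G where
  cp_axiom: "C \<in> G \<Longrightarrow> cp G C"
| cp_lit: "cp G ([(1, l)], 0)"
| cp_add: "cp G C \<Longrightarrow> cp G D \<Longrightarrow> cp G (add_pbc C D)"
| cp_scale: "cp G C \<Longrightarrow> c > 0 \<Longrightarrow> cp G (scale_pbc c C)"
| cp_div: "cp G C \<Longrightarrow> (\<forall>(a, l) \<in> set (fst C). a \<ge> 0) \<Longrightarrow> c > 0 \<Longrightarrow> cp G (div_pbc c C)"
| cp_norm: "cp G C \<Longrightarrow> norm_coeff D = norm_coeff C \<Longrightarrow> norm_deg D = norm_deg C \<Longrightarrow> cp G D"

text \<open>\<open>G \<turnstile> D\<close>: derivable, or \<open>0 \<ge> 1\<close> derivable from \<open>G \<union> {\<not>D}\<close>.\<close>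
definition derives :: "'v pbc set \<Rightarrow> 'v pbc \<Rightarrow> bool" where
  "derives G D = (cp G D \<or> cp (G \<union> {neg_pbc D}) ([], 1))"

definition derives_set :: "'v pbc set \<Rightarrow> 'v pbc set \<Rightarrow> bool" where
  "derives_set G H = (\<forall>D\<in>H. derives G D)"

text \<open>Placeholder variables \<open>u_i\<close> (\<open>U i\<close>) and \<open>v_i\<close> (\<open>V i\<close>).\<close>
datatype ph = U nat | V nat

definition pbc_vars :: "'v pbc \<Rightarrow> 'v set" where
  "pbc_vars C = lit_var ` snd ` set (fst C)"

definition ord_inst :: "ph pbc set \<Rightarrow> (nat \<Rightarrow> 'v lterm) \<Rightarrow> (nat \<Rightarrow> 'v lterm) \<Rightarrow> 'v pbc set" where
  "ord_inst Ord su sv = subst_set (\<lambda>p. case p of U i \<Rightarrow> su i | V i \<Rightarrow> sv i) Ord"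

text \<open>\<open>\<alpha> \<preceq> \<beta>\<close> iff \<open>O(z|_\<alpha>, z|_\<beta>)\<close> is true (it is variable-free).\<close>
definition ord_le :: "ph pbc set \<Rightarrow> 'v list \<Rightarrow> ('v \<Rightarrow> bool) \<Rightarrow> ('v \<Rightarrow> bool) \<Rightarrow> bool" where
  "ord_le Ord z \<alpha> \<beta> =
     (\<forall>\<gamma>::'v \<Rightarrow> bool. sat_set \<gamma> (ord_inst Ord (\<lambda>i. ConstT (\<alpha> (z ! i))) (\<lambda>i. ConstT (\<beta> (z ! i)))))"

definition preorder_encoding :: "ph pbc set \<Rightarrow> 'v list \<Rightarrow> bool" where
  "preorder_encoding Ord z =
     (finite Ord \<and>
      (\<forall>C\<in>Ord. \<forall>p\<in>pbc_vars C. case p of U i \<Rightarrow> i < length z | V i \<Rightarrow> i < length z) \<and>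
      (\<forall>\<alpha>. ord_le Ord z \<alpha> \<alpha>) \<and>
      (\<forall>\<alpha> \<beta> \<gamma>. ord_le Ord z \<alpha> \<beta> \<longrightarrow> ord_le Ord z \<beta> \<gamma> \<longrightarrow> ord_le Ord z \<alpha> \<gamma>))"

definition ord_subst :: "ph pbc set \<Rightarrow> 'v list \<Rightarrow> ('v \<Rightarrow> 'v lterm) \<Rightarrow> 'v pbc set" where
  "ord_subst Ord z \<omega> = ord_inst Ord (\<lambda>i. \<omega> (z ! i)) (\<lambda>i. LitT (Pos (z ! i)))"

definition ord_le_f :: "ph pbc set \<Rightarrow> 'v list \<Rightarrow> 'v obj \<Rightarrow> ('v \<Rightarrow> bool) \<Rightarrow> ('v \<Rightarrow> bool) \<Rightarrow> bool" where
  "ord_le_f Ord z f \<alpha> \<beta> = (ord_le Ord z \<alpha> \<beta> \<and> obj_val \<alpha> f \<le> obj_val \<beta> f)"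

definition configuration ::
  "'v pbc set \<Rightarrow> 'v obj \<Rightarrow> 'v pbc set \<Rightarrow> 'v pbc set \<Rightarrow> ph pbc set \<Rightarrow> 'v list \<Rightarrow> bnd \<Rightarrow> bool" where
  "configuration F f \<C> \<D> Ord z v = (finite F \<and> finite \<C> \<and> finite \<D> \<and> preorder_encoding Ord z)"

definition weakly_valid ::
  "'v pbc set \<Rightarrow> 'v obj \<Rightarrow> 'v pbc set \<Rightarrow> 'v pbc set \<Rightarrow> ph pbc set \<Rightarrow> 'v list \<Rightarrow> bnd \<Rightarrow> bool" where
  "weakly_valid F f \<C> \<D> Ord z v =
     ((\<forall>v'::int. bnd_less v' v \<longrightarrow> satisfiable (F \<union> obj_le f (Fin v')) \<longrightarrow>
                                    satisfiable (\<C> \<union> obj_le f (Fin v'))) \<and>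
      (\<forall>\<rho>. sat_set \<rho> (\<C> \<union> obj_le f (bnd_minus1 v)) \<longrightarrow>
            (\<exists>\<rho>'. ord_le_f Ord z f \<rho>' \<rho> \<and> sat_set \<rho>' (\<C> \<union> \<D> \<union> obj_le f (bnd_minus1 v)))))"

definition valid ::
  "'v pbc set \<Rightarrow> 'v obj \<Rightarrow> 'v pbc set \<Rightarrow> 'v pbc set \<Rightarrow> ph pbc set \<Rightarrow> 'v list \<Rightarrow> bnd \<Rightarrow> bool" where
  "valid F f \<C> \<D> Ord z v =
     (weakly_valid F f \<C> \<D> Ord z v \<and>
      (v \<noteq> Infty \<longrightarrow> satisfiable (F \<union> obj_le f v)) \<and>
      (\<forall>v'::int. bnd_less v' v \<longrightarrow> satisfiable (\<C> \<union> obj_le f (Fin v')) \<longrightarrow>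
                                   satisfiable (F \<union> obj_le f (Fin v'))))"

end

theory Submission
  imports Defs
begin

text \<open>Deleting a constraint \<open>C\<close> preserves (weak) validity because every model \<open>\<rho>\<close> of the
  remaining constraints (within the bound) that falsifies \<open>C\<close> is improved by \<open>\<rho> \<circ> \<omega>\<close>:
  soundness of cutting planes turns the redundance derivation into the facts that \<open>\<rho> \<circ> \<omega>\<close>
  satisfies all of \<open>\<C>\<close>, has objective value at most that of \<open>\<rho>\<close>, and lies below \<open>\<rho>\<close> in
  the preorder.  Hence for models of \<open>\<C>' \<union> {f \<le> v - 1}\<close> there is always a \<open>\<preceq>\<^sub>f\<close>-smaller
  model of \<open>\<C> \<union> {f \<le> v - 1}\<close>, and both validity conditions transfer by transitivity of
  \<open>\<preceq>\<^sub>f\<close>; shrinking \<open>\<D>\<close> is harmless.\<close>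

lemma lit_val_01: "lit_val \<alpha> l = 0 \<or> lit_val \<alpha> l = 1"
  by (cases l) auto

lemma lit_val_lit_neg: "lit_val \<alpha> (lit_neg l) = 1 - lit_val \<alpha> l"
  by (cases l) auto

lemma lhs_val_Nil [simp]: "lhs_val \<alpha> [] = 0"
  by (simp add: lhs_val_def)

lemma lhs_val_Cons [simp]: "lhs_val \<alpha> ((a, l) # ts) = a * lit_val \<alpha> l + lhs_val \<alpha> ts"
  by (simp add: lhs_val_def)

lemma lhs_val_append [simp]: "lhs_val \<alpha> (xs @ ys) = lhs_val \<alpha> xs + lhs_val \<alpha> ys"
  by (simp add: lhs_val_def)

lemma lhs_val_scale: "lhs_val \<alpha> (map (\<lambda>(a, l). (c * a, l)) ts) = c * lhs_val \<alpha> ts"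
  by (induction ts) (auto simp: algebra_simps)

lemma lhs_val_uminus: "lhs_val \<alpha> (map (\<lambda>(a, l). (- a, l)) ts) = - lhs_val \<alpha> ts"
  using lhs_val_scale[of \<alpha> "-1" ts] by simp

lemma le_mult_ceiling_div:
  fixes a c :: int
  assumes "c > 0"
  shows "a \<le> c * (- ((- a) div c))"
proof -
  have "- a = c * ((- a) div c) + (- a) mod c" by simp
  moreover have "(- a) mod c < c" using assms by simp
  moreover have "(- a) mod c \<ge> 0" using assms by simp
  ultimately show ?thesis by linarith
qed

lemma lhs_val_le_mult_ceiling_div:
  assumes "(c::int) > 0"
  shows "lhs_val \<alpha> ts \<le> c * lhs_val \<alpha> (map (\<lambda>(a, l). (- ((- a) div c), l)) ts)"
proof (induction ts)
  case (Cons p ts)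
  obtain a l where p: "p = (a, l)" by (cases p)
  have "a * lit_val \<alpha> l \<le> c * (- ((- a) div c)) * lit_val \<alpha> l"
    using lit_val_01[of \<alpha> l] le_mult_ceiling_div[OF assms, of a] by auto
  then show ?case using Cons p by (simp add: algebra_simps)
qed simp

lemma lhs_val_minus_deg_norm:
  assumes "finite S" "pbc_vars C \<subseteq> S"
  shows "lhs_val \<alpha> (fst C) - snd C = (\<Sum>x\<in>S. norm_coeff C x * of_bool (\<alpha> x)) - norm_deg C"
proof -
  obtain ts d where C: "C = (ts, d)" by (cases C)
  have "lit_var ` snd ` set ts \<subseteq> S" using assms(2) by (simp add: C pbc_vars_def)
  then show ?thesis unfolding C
  proof (induction ts arbitrary: d)
    case Nil then show ?case by (simp add: norm_coeff_def norm_deg_def)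
  next
    case (Cons p ts)
    obtain a l where p: "p = (a, l)" by (cases p)
    let ?c = "case l of Pos _ \<Rightarrow> a | Neg _ \<Rightarrow> - a"
    have coeff: "norm_coeff ((a, l) # ts, d) x =
        (if lit_var l = x then ?c else 0) + norm_coeff (ts, d) x" for x
      by (simp add: norm_coeff_def)
    have deg: "norm_deg ((a, l) # ts, d) = norm_deg (ts, d) - (case l of Pos _ \<Rightarrow> 0 | Neg _ \<Rightarrow> a)"
      by (simp add: norm_deg_def)
    have "lit_var l \<in> S" using Cons.prems p by auto
    then have sum: "(\<Sum>x\<in>S. norm_coeff ((a, l) # ts, d) x * of_bool (\<alpha> x)) =
        ?c * of_bool (\<alpha> (lit_var l)) + (\<Sum>x\<in>S. norm_coeff (ts, d) x * of_bool (\<alpha> x))"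
      unfolding coeff distrib_right sum.distrib
      using assms(1) by (simp add: if_distrib[where f="\<lambda>u. u * _"] cong: if_cong)
    have lit: "a * lit_val \<alpha> l = ?c * of_bool (\<alpha> (lit_var l)) + (case l of Pos _ \<Rightarrow> 0 | Neg _ \<Rightarrow> a)"
      by (cases l) (auto simp: algebra_simps)
    have "lhs_val \<alpha> ts - d = (\<Sum>x\<in>S. norm_coeff (ts, d) x * of_bool (\<alpha> x)) - norm_deg (ts, d)"
      using Cons.IH Cons.prems p by simp
    then show ?case unfolding p fst_conv snd_conv lhs_val_Cons sum deg lit by linarith
  qed
qed

lemma sat_pbc_norm:
  assumes "norm_coeff D = norm_coeff C" "norm_deg D = norm_deg C" "sat_pbc \<alpha> C"
  shows "sat_pbc \<alpha> D"
proof -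
  define S where "S = pbc_vars C \<union> pbc_vars D"
  have "finite S" by (simp add: S_def pbc_vars_def)
  then show ?thesis
    using assms lhs_val_minus_deg_norm[of S C \<alpha>] lhs_val_minus_deg_norm[of S D \<alpha>]
    by (simp add: S_def sat_pbc_def)
qed

lemma sat_pbc_neg_pbc [simp]: "sat_pbc \<alpha> (neg_pbc C) \<longleftrightarrow> \<not> sat_pbc \<alpha> C"
  by (auto simp: sat_pbc_def neg_pbc_def lhs_val_uminus)

lemma sat_set_empty [simp]: "sat_set \<alpha> {}"
  by (simp add: sat_set_def)

lemma sat_set_Un [simp]: "sat_set \<alpha> (A \<union> B) \<longleftrightarrow> sat_set \<alpha> A \<and> sat_set \<alpha> B"
  by (auto simp: sat_set_def)

lemma sat_set_insert [simp]: "sat_set \<alpha> (insert C A) \<longleftrightarrow> sat_pbc \<alpha> C \<and> sat_set \<alpha> A"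
  by (auto simp: sat_set_def)

lemma sat_set_mono: "sat_set \<alpha> B \<Longrightarrow> A \<subseteq> B \<Longrightarrow> sat_set \<alpha> A"
  by (auto simp: sat_set_def)

lemma cp_sound:
  assumes "cp G C" "sat_set \<alpha> G"
  shows "sat_pbc \<alpha> C"
  using assms
proof (induction rule: cp.induct)
  case (cp_axiom C) then show ?case by (simp add: sat_set_def)
next
  case (cp_lit l) then show ?case using lit_val_01[of \<alpha> l] by (auto simp: sat_pbc_def)
next
  case (cp_add C D) then show ?case by (auto simp: sat_pbc_def add_pbc_def)
next
  case (cp_scale C c) then show ?case by (auto simp: sat_pbc_def scale_pbc_def lhs_val_scale)
next
  case (cp_div C c)
  define L where "L = lhs_val \<alpha> (map (\<lambda>(a, l). (- ((- a) div c), l)) (fst C))"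
  have "snd C \<le> c * L"
    using cp_div lhs_val_le_mult_ceiling_div[of c \<alpha> "fst C"] by (auto simp: sat_pbc_def L_def)
  then have "(c * (- L)) div c \<le> (- snd C) div c"
    using \<open>c > 0\<close> by (intro zdiv_mono1) auto
  moreover have "(c * (- L)) div c = - L"
    using \<open>c > 0\<close> by (metis nonzero_mult_div_cancel_left less_irrefl)
  ultimately show ?case using \<open>c > 0\<close> by (simp add: sat_pbc_def div_pbc_def L_def)
next
  case (cp_norm C D) then show ?case using sat_pbc_norm by blast
qed

lemma derives_sound:
  assumes "derives G D" "sat_set \<alpha> G"
  shows "sat_pbc \<alpha> D"
proof (rule ccontr)
  assume "\<not> sat_pbc \<alpha> D"
  then have "sat_set \<alpha> (G \<union> {neg_pbc D})" and "\<not> cp G D"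
    using assms(2) cp_sound[of G D \<alpha>] by auto
  then have "sat_pbc \<alpha> ([], 1)"
    using assms(1) cp_sound[of "G \<union> {neg_pbc D}" "([], 1)" \<alpha>] by (auto simp: derives_def)
  then show False by (simp add: sat_pbc_def)
qed

lemma derives_set_sound: "derives_set G H \<Longrightarrow> sat_set \<alpha> G \<Longrightarrow> sat_set \<alpha> H"
  by (auto simp: derives_set_def sat_set_def intro: derives_sound[unfolded sat_set_def])

text \<open>A heterogeneous \<open>assign_comp\<close>: instantiating the preorder encoding substitutes
  variables for placeholders.\<close>
definition comp_assign :: "('b \<Rightarrow> bool) \<Rightarrow> ('a \<Rightarrow> 'b lterm) \<Rightarrow> 'a \<Rightarrow> bool" where
  "comp_assign \<alpha> \<omega> = (\<lambda>x. lterm_val \<alpha> (\<omega> x))"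

lemma lit_val_comp_assign:
  "lit_val (comp_assign \<alpha> \<omega>) l = of_bool (lterm_val \<alpha> (subst_lit \<omega> l))"
proof (cases l)
  case (Pos x) then show ?thesis
    by (cases "\<omega> x") (use lit_val_01 in \<open>auto simp: comp_assign_def\<close>)
next
  case (Neg x) then show ?thesis
    by (cases "\<omega> x") (use lit_val_01 in \<open>auto simp: comp_assign_def lit_val_lit_neg\<close>)
qed

lemma lhs_val_subst_terms:
  "lhs_val \<alpha> (fst (subst_terms \<omega> ts)) + snd (subst_terms \<omega> ts) = lhs_val (comp_assign \<alpha> \<omega>) ts"
proof (induction ts)
  case Nil then show ?case by (simp add: subst_terms_def)
next
  case (Cons p ts)
  obtain a l where p: "p = (a, l)" by (cases p)
  have "a * lit_val (comp_assign \<alpha> \<omega>) l =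
      lhs_val \<alpha> (case subst_lit \<omega> l of LitT l' \<Rightarrow> [(a, l')] | ConstT _ \<Rightarrow> [])
      + (case subst_lit \<omega> l of LitT _ \<Rightarrow> 0 | ConstT b \<Rightarrow> (if b then a else 0))"
    unfolding lit_val_comp_assign by (cases "subst_lit \<omega> l") (use lit_val_01 in auto)
  with Cons.IH show ?case by (simp add: p subst_terms_def)
qed

lemma sat_pbc_subst_pbc: "sat_pbc \<alpha> (subst_pbc \<omega> C) \<longleftrightarrow> sat_pbc (comp_assign \<alpha> \<omega>) C"
  using lhs_val_subst_terms[of \<alpha> \<omega> "fst C"] by (auto simp: sat_pbc_def subst_pbc_def)

lemma sat_set_subst_set: "sat_set \<alpha> (subst_set \<omega> G) \<longleftrightarrow> sat_set (comp_assign \<alpha> \<omega>) G"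
  by (auto simp: sat_set_def subst_set_def sat_pbc_subst_pbc)

lemma sat_obj_subst_le:
  "sat_pbc \<alpha> (obj_subst_le f \<omega>) \<longleftrightarrow> obj_val (comp_assign \<alpha> \<omega>) f \<le> obj_val \<alpha> f"
  using lhs_val_subst_terms[of \<alpha> \<omega> f]
  by (auto simp: sat_pbc_def obj_subst_le_def obj_val_def lhs_val_uminus)

lemma sat_obj_le_Fin [simp]: "sat_set \<alpha> (obj_le f (Fin k)) \<longleftrightarrow> obj_val \<alpha> f \<le> k"
  by (auto simp: sat_set_def sat_pbc_def obj_val_def lhs_val_uminus)

declare obj_le.simps(1) [simp del]

lemma sat_obj_le_mono:
  "sat_set \<rho> (obj_le f b) \<Longrightarrow> obj_val \<sigma> f \<le> obj_val \<rho> f \<Longrightarrow> sat_set \<sigma> (obj_le f b)"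
  by (cases b) auto

lemma sat_obj_le_bnd_minus1:
  "bnd_less k v \<Longrightarrow> obj_val \<rho> f \<le> k \<Longrightarrow> sat_set \<rho> (obj_le f (bnd_minus1 v))"
  by (cases v) auto

lemma ord_le_of_sat_ord_subst:
  assumes "sat_set \<rho> (ord_subst Ord z \<omega>)"
  shows "ord_le Ord z (comp_assign \<rho> \<omega>) \<rho>"
proof -
  let ?\<sigma> = "\<lambda>p. case p of U i \<Rightarrow> \<omega> (z ! i) | V i \<Rightarrow> LitT (Pos (z ! i))"
  have "sat_set (comp_assign \<rho> ?\<sigma>) Ord"
    using assms by (simp add: ord_subst_def ord_inst_def sat_set_subst_set)
  \<comment> \<open>instantiated with constants, the encoding no longer depends on the assignment \<open>\<gamma>\<close>\<close>
  moreover have "comp_assign \<gamma> (\<lambda>p. case p of U i \<Rightarrow> ConstT (comp_assign \<rho> \<omega> (z ! i))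
                                         | V i \<Rightarrow> ConstT (\<rho> (z ! i))) = comp_assign \<rho> ?\<sigma>"
    for \<gamma> :: "'a \<Rightarrow> bool"
    by (rule ext) (simp add: comp_assign_def split: ph.split)
  ultimately show ?thesis by (simp add: ord_le_def ord_inst_def sat_set_subst_set)
qed

lemma ord_le_f_refl: "preorder_encoding Ord z \<Longrightarrow> ord_le_f Ord z f \<rho> \<rho>"
  by (simp add: ord_le_f_def preorder_encoding_def)

lemma ord_le_f_trans:
  "preorder_encoding Ord z \<Longrightarrow> ord_le_f Ord z f \<alpha> \<beta> \<Longrightarrow> ord_le_f Ord z f \<beta> \<gamma> \<Longrightarrow>
   ord_le_f Ord z f \<alpha> \<gamma>"
  unfolding ord_le_f_def preorder_encoding_def by (meson order_trans)

lemma redundance_improves: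
  assumes "derives_set (\<C>' \<union> obj_le f (bnd_minus1 v) \<union> {neg_pbc C})
                       (subst_set \<omega> (\<C>' \<union> {C}) \<union> {obj_subst_le f \<omega>} \<union> ord_subst Ord z \<omega>)"
    and "sat_set \<rho> (\<C>' \<union> obj_le f (bnd_minus1 v))" and "\<not> sat_pbc \<rho> C"
  shows "sat_set (comp_assign \<rho> \<omega>) (\<C>' \<union> {C}) \<and> ord_le_f Ord z f (comp_assign \<rho> \<omega>) \<rho>"
proof -
  have "sat_set \<rho> (subst_set \<omega> (\<C>' \<union> {C}) \<union> {obj_subst_le f \<omega>} \<union> ord_subst Ord z \<omega>)"
    using assms by (intro derives_set_sound[OF assms(1)]) simp
  then have "sat_set (comp_assign \<rho> \<omega>) (\<C>' \<union> {C})"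
    and "obj_val (comp_assign \<rho> \<omega>) f \<le> obj_val \<rho> f"
    and "ord_le Ord z (comp_assign \<rho> \<omega>) \<rho>"
    by (simp_all only: sat_set_Un sat_set_insert sat_set_empty sat_set_subst_set
        sat_obj_subst_le ord_le_of_sat_ord_subst)
  then show ?thesis by (simp add: ord_le_f_def)
qed

definition models_improvable ::
  "ph pbc set \<Rightarrow> 'v list \<Rightarrow> 'v obj \<Rightarrow> bnd \<Rightarrow> 'v pbc set \<Rightarrow> 'v pbc set \<Rightarrow> bool" where
  "models_improvable Ord z f v \<C>' \<C> =
     (\<forall>\<rho>. sat_set \<rho> (\<C>' \<union> obj_le f (bnd_minus1 v)) \<longrightarrow>
          (\<exists>\<sigma>. ord_le_f Ord z f \<sigma> \<rho> \<and> sat_set \<sigma> \<C>))"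

lemma models_improvable_refl:
  assumes "preorder_encoding Ord z"
  shows "models_improvable Ord z f v \<C> \<C>"
  unfolding models_improvable_def using ord_le_f_refl[OF assms] by auto

lemma models_improvable_redundant:
  assumes pre: "preorder_encoding Ord z"
    and der: "derives_set (\<C> - {C} \<union> obj_le f (bnd_minus1 v) \<union> {neg_pbc C})
                (subst_set \<omega> (\<C> - {C} \<union> {C}) \<union> {obj_subst_le f \<omega>} \<union> ord_subst Ord z \<omega>)"
  shows "models_improvable Ord z f v (\<C> - {C}) \<C>"
  unfolding models_improvable_def
proof (intro allI impI)
  fix \<rho> assume sat: "sat_set \<rho> (\<C> - {C} \<union> obj_le f (bnd_minus1 v))"
  show "\<exists>\<sigma>. ord_le_f Ord z f \<sigma> \<rho> \<and> sat_set \<sigma> \<C>"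
  proof (cases "sat_pbc \<rho> C")
    case True
    with sat have "sat_set \<rho> \<C>" by (auto simp: sat_set_def)
    then show ?thesis using ord_le_f_refl[OF pre] by blast
  next
    case False
    have "\<C> \<subseteq> \<C> - {C} \<union> {C}" by blast
    then show ?thesis
      using redundance_improves[OF der sat False] sat_set_mono by blast
  qed
qed

lemma weakly_valid_mono:
  assumes pre: "preorder_encoding Ord z" and "\<C>' \<subseteq> \<C>" "\<D>' \<subseteq> \<D>"
    and improvable: "models_improvable Ord z f v \<C>' \<C>"
    and wv: "weakly_valid F f \<C> \<D> Ord z v"
  shows "weakly_valid F f \<C>' \<D>' Ord z v"
  unfolding weakly_valid_def
proof (intro conjI allI impI)
  fix v' assume "bnd_less v' v" "satisfiable (F \<union> obj_le f (Fin v'))"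
  with wv have "satisfiable (\<C> \<union> obj_le f (Fin v'))" by (simp add: weakly_valid_def)
  with \<open>\<C>' \<subseteq> \<C>\<close> show "satisfiable (\<C>' \<union> obj_le f (Fin v'))"
    unfolding satisfiable_def by (meson Un_mono order_refl sat_set_mono)
next
  fix \<rho> assume sat: "sat_set \<rho> (\<C>' \<union> obj_le f (bnd_minus1 v))"
  then obtain \<sigma> where \<sigma>: "ord_le_f Ord z f \<sigma> \<rho>" "sat_set \<sigma> \<C>"
    using improvable by (auto simp: models_improvable_def)
  with sat have "sat_set \<sigma> (\<C> \<union> obj_le f (bnd_minus1 v))"
    by (auto simp: ord_le_f_def intro: sat_obj_le_mono)
  then obtain \<rho>' where "ord_le_f Ord z f \<rho>' \<sigma>" "sat_set \<rho>' (\<C> \<union> \<D> \<union> obj_le f (bnd_minus1 v))"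
    using wv by (auto simp: weakly_valid_def)
  moreover have "\<C>' \<union> \<D>' \<union> obj_le f (bnd_minus1 v) \<subseteq> \<C> \<union> \<D> \<union> obj_le f (bnd_minus1 v)"
    using assms(2,3) by blast
  ultimately show
    "\<exists>\<rho>'. ord_le_f Ord z f \<rho>' \<rho> \<and> sat_set \<rho>' (\<C>' \<union> \<D>' \<union> obj_le f (bnd_minus1 v))"
    using \<sigma>(1) ord_le_f_trans[OF pre] sat_set_mono by blast
qed

lemma valid_mono:
  assumes pre: "preorder_encoding Ord z" and "\<C>' \<subseteq> \<C>" "\<D>' \<subseteq> \<D>"
    and improvable: "models_improvable Ord z f v \<C>' \<C>"
    and valid: "valid F f \<C> \<D> Ord z v"
  shows "valid F f \<C>' \<D>' Ord z v"
  unfolding valid_def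
proof (intro conjI allI impI)
  show "weakly_valid F f \<C>' \<D>' Ord z v"
    using weakly_valid_mono[OF assms(1-4)] valid by (simp add: valid_def)
  show "v \<noteq> Infty \<Longrightarrow> satisfiable (F \<union> obj_le f v)"
    using valid by (simp add: valid_def)
next
  fix v' assume lt: "bnd_less v' v" and "satisfiable (\<C>' \<union> obj_le f (Fin v'))"
  then obtain \<rho> where \<rho>: "sat_set \<rho> \<C>'" "obj_val \<rho> f \<le> v'"
    by (auto simp: satisfiable_def)
  with lt have "sat_set \<rho> (\<C>' \<union> obj_le f (bnd_minus1 v))"
    by (simp add: sat_obj_le_bnd_minus1)
  then obtain \<sigma> where "ord_le_f Ord z f \<sigma> \<rho>" "sat_set \<sigma> \<C>"
    using improvable by (auto simp: models_improvable_def)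
  with \<rho>(2) have "satisfiable (\<C> \<union> obj_le f (Fin v'))"
    by (auto simp: satisfiable_def ord_le_f_def)
  with valid lt show "satisfiable (F \<union> obj_le f (Fin v'))"
    by (simp add: valid_def)
qed

theorem mainTheorem5:
  fixes F :: "'v pbc set" and f :: "'v obj"
    and \<C> \<D> \<C>' \<D>' :: "'v pbc set" and Ord :: "ph pbc set" and z :: "'v list" and v :: bnd
  assumes conf: "configuration F f \<C> \<D> Ord z v"
    and D'_sub: "\<D>' \<subseteq> \<D>"
    and C'_cases: "\<C>' = \<C> \<or>
       (\<exists>C \<omega>. \<C>' = \<C> - {C} \<and>
          derives_set (\<C>' \<union> obj_le f (bnd_minus1 v) \<union> {neg_pbc C})
                      (subst_set \<omega> (\<C>' \<union> {C}) \<union> {obj_subst_le f \<omega>} \<union> ord_subst Ord z \<omega>))"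
  shows "(weakly_valid F f \<C> \<D> Ord z v \<longrightarrow> weakly_valid F f \<C>' \<D>' Ord z v) \<and>
         (valid F f \<C> \<D> Ord z v \<longrightarrow> valid F f \<C>' \<D>' Ord z v)"
proof -
  have pre: "preorder_encoding Ord z" using conf by (simp add: configuration_def)
  have "\<C>' \<subseteq> \<C>" using C'_cases by blast
  moreover have "models_improvable Ord z f v \<C>' \<C>"
    using C'_cases models_improvable_refl[OF pre] models_improvable_redundant[OF pre] by metis
  ultimately show ?thesis
    using weakly_valid_mono[OF pre _ D'_sub] valid_mono[OF pre _ D'_sub] by simp
qed

end
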